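(* Let $h=z+\sum_{l\ge1}h_lz^{-l}$ be a formal Laurent series with complex coefficients $h_l$, put $\lambda=z^2$, and let $H^{(k)}$ and $V^{(j)}$ be as defined in the context below. Then for every integer $k\ge0$: (1) the entries of $V^{(2k+1)}$ are polynomials in $\lambda$ whose coefficients depend only on $(h_1,\dots,h_{2k+1})$, and the map $(h_1,\dots,h_{2k+1})\mapsto V^{(2k+1)}$ is injective; (2) $\mathrm{Tr}\,V^{(2k+1)}=0$; (3) for every integer $0\le i\le k$, $$V^{(2i+1)}=\big(\lambda^{i-k}V^{(2k+1)}\big)_+-\alpha_{ik}\begin{pmatrix}0&0\\1&0\end{pmatrix},$$ where $(\cdot)_+$ denotes the projection onto the nonnegative powers of $\lambda$ (applied entrywise), and $\alpha_{ik}$ is the $(1,2)$ entry of the coefficient of $\lambda^{k-i-1}$ in $V^{(2k+1)}$ (the coefficient of $\lambda^{-1}$ being $0$).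
   Context: Given $h=z+\sum_{l\ge1}h_lz^{-l}$, define Laurent series $H^{(k)}$, $k\ge0$, by $H^{(0)}=1$, $H^{(1)}=h$, $H^{(2)}=z^2$ and recursively $H^{(k+2)}=z^2H^{(k)}-H^k_1H^{(1)}-H^k_2$ for $k\ge1$, where $H^k_l$ denotes the coefficient of $z^{-l}$ in $H^{(k)}$ (so $H^{(k)}=z^k+\sum_{l\ge1}H^k_lz^{-l}$ and $H^1_l=h_l$). Every $H^{(k)}$, and every series $H^{(j+1)}+\sum_{l=1}^jh_lH^{(j-l)}+H^j_1$, can be written uniquely as $a(\lambda)+b(\lambda)h$ with $a,b$ polynomials in $\lambda=z^2$ (uniqueness because the elements $\lambda^j,\lambda^jh$, $j\ge0$, are linearly independent). For $j\ge1$, $V^{(j)}$ is the $2\times2$ matrix with polynomial entries in $\lambda$ whose first row is $(p_j,q_j)$, where $H^{(j)}=p_j(\lambda)+q_j(\lambda)h$, and whose second row is $(a_j,b_j)$, where $H^{(j+1)}+\sum_{l=1}^jh_lH^{(j-l)}+H^j_1=a_j(\lambda)+b_j(\lambda)h$. Equivalently, $V^{(j)}$ is defined by $\big(\partial_{t_j}+H^{(j)}\big)(1,h)^T=V^{(j)}(1,h)^T$, where $\partial h/\partial t_j=-hH^{(j)}+H^{(j+1)}+\sum_{l=1}^jh_lH^{(j-l)}+H^j_1$. For example $V^{(1)}=\begin{pmatrix}0&1\\ \lambda+2h_1&0\end{pmatrix}$. *)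

theory Defs
  imports "HOL-Analysis.Analysis" "HOL-Computational_Algebra.Polynomial"
begin

text \<open>Formal Laurent series in z with finitely many positive powers are represented by
  their coefficient functions  int => complex  (value at n = coefficient of z^n).
  The series h = z + sum_{l>=1} h_l z^(-l) is determined by hs :: nat => complex,
  with hs l = h_l for l >= 1 (hs 0 is irrelevant).\<close>

definition hser :: "(nat \<Rightarrow> complex) \<Rightarrow> int \<Rightarrow> complex" where
  "hser hs n = (if n = 1 then 1 else if n \<le> -1 then hs (nat (- n)) else 0)"

fun H :: "(nat \<Rightarrow> complex) \<Rightarrow> nat \<Rightarrow> int \<Rightarrow> complex" where
  "H hs 0 = (\<lambda>n. if n = 0 then 1 else 0)"
| "H hs (Suc 0) = hser hs"
| "H hs (Suc (Suc 0)) = (\<lambda>n. if n = 2 then 1 else 0)"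
| "H hs (Suc (Suc (Suc k))) =
     (\<lambda>n. H hs (Suc k) (n - 2) - H hs (Suc k) (-1) * hser hs n
          - (if n = 0 then H hs (Suc k) (-2) else 0))"

text \<open>The series a(lambda) + b(lambda) h, with lambda = z^2.\<close>
definition lc :: "(nat \<Rightarrow> complex) \<Rightarrow> complex poly \<Rightarrow> complex poly \<Rightarrow> int \<Rightarrow> complex" where
  "lc hs a b n =
     (if n \<ge> 0 \<and> even n then coeff a (nat (n div 2)) else 0)
     + (\<Sum>j\<le>degree b. coeff b j * hser hs (n - 2 * int j))"

definition decomp :: "(nat \<Rightarrow> complex) \<Rightarrow> (int \<Rightarrow> complex) \<Rightarrow> complex poly \<times> complex poly" where
  "decomp hs f = (THE ab. lc hs (fst ab) (snd ab) = f)"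

definition S :: "(nat \<Rightarrow> complex) \<Rightarrow> nat \<Rightarrow> int \<Rightarrow> complex" where
  "S hs j = (\<lambda>n. H hs (j + 1) n + (\<Sum>l = 1..j. hs l * H hs (j - l) n)
                 + (if n = 0 then H hs j (-1) else 0))"

definition V :: "(nat \<Rightarrow> complex) \<Rightarrow> nat \<Rightarrow> complex poly ^ 2 ^ 2" where
  "V hs j = (\<chi> r c.
      let ab = (if r = 1 then decomp hs (H hs j) else decomp hs (S hs j))
      in if c = 1 then fst ab else snd ab)"

text \<open>(.)_+ of lambda^(-m) p : the nonnegative-power part of p / lambda^m.\<close>
definition plus_part :: "nat \<Rightarrow> complex poly ^ 2 ^ 2 \<Rightarrow> complex poly ^ 2 ^ 2" where
  "plus_part m A = (\<chi> r c. poly_shift m (A $ r $ c))"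

definition E21 :: "complex \<Rightarrow> complex poly ^ 2 ^ 2" where
  "E21 a = (\<chi> r c. if r = 2 \<and> c = 1 then [:a:] else 0)"

end

theory Submission
  imports Defs
begin

text \<open>Write H^(k) = p_k(\<lambda>) + q_k(\<lambda>) h. The recursion for H^(k) becomes
  p_{k+2} = \<lambda> p_k - H^k_2 and q_{k+2} = \<lambda> q_k - H^k_1, so every entry of V^(j+2) is \<lambda> times
  the corresponding entry of V^(j) plus a constant, except that in the lower left entry the
  constant H^j_1 = -q_{j+2}(0) of V^(j) is lost; iterating this gives (3). By (3) the trace of
  V^(2k+1) is \<lambda> times the trace of V^(2k-1) plus its constant term, and that constant term
  cancels by a direct computation. For (1), V^(2k+1) determines V^(2k-1) by (3); since q_{2k-1}
  is monic of degree k - 1, the constant terms p_{2k+1}(0) = -h_{2k} - ... and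
  a_{2k+1}(0) = 2 h_{2k+1} + ... then recover the two new coefficients from the lower ones.\<close>

lemma poly_shift_add: "poly_shift n (p + q) = poly_shift n p + poly_shift n q"
  by (simp add: poly_eq_iff coeff_poly_shift)

lemma poly_shift_smult: "poly_shift n (smult c p) = smult c (poly_shift n p)"
  by (simp add: poly_eq_iff coeff_poly_shift)

lemma poly_shift_sum: "poly_shift n (\<Sum>i\<in>A. f i) = (\<Sum>i\<in>A. poly_shift n (f i))"
  by (induction A rule: infinite_finite_induct) (simp_all add: poly_shift_add)

lemma poly_shift_pCons: "poly_shift (Suc n) (pCons a p) = poly_shift n p"
  by (simp add: poly_eq_iff coeff_poly_shift)

lemma poly_shift_poly_shift: "poly_shift m (poly_shift n p) = poly_shift (m + n) p"
  by (simp add: poly_eq_iff coeff_poly_shift add.assoc)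

lemma pCons_coeff_0_poly_shift: "pCons (coeff p 0) (poly_shift 1 p) = p"
  by (simp add: poly_eq_iff coeff_poly_shift coeff_pCons split: nat.split)

lemma plus_part_add: "plus_part m (A + B) = plus_part m A + plus_part m B"
  by (simp add: plus_part_def vec_eq_iff poly_shift_add)

lemma plus_part_plus_part: "plus_part m (plus_part n A) = plus_part (m + n) A"
  by (simp add: plus_part_def vec_eq_iff poly_shift_poly_shift)

lemma plus_part_E21: "0 < m \<Longrightarrow> plus_part m (E21 c) = 0"
  by (cases m) (simp_all add: plus_part_def E21_def vec_eq_iff poly_shift_pCons)

lemma trace_plus_part: "trace (plus_part m A) = poly_shift m (trace A)"
  by (simp add: trace_def plus_part_def poly_shift_sum)

lemma trace_E21: "trace (E21 c) = 0"
  by (simp add: trace_def E21_def sum_2)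

lemma lc_eq_sum_atMost:
  assumes "degree b \<le> N"
  shows "lc hs a b n = (if 0 \<le> n \<and> even n then coeff a (nat (n div 2)) else 0)
                      + (\<Sum>j\<le>N. coeff b j * hser hs (n - 2 * int j))"
proof -
  have "(\<Sum>j\<le>degree b. coeff b j * hser hs (n - 2 * int j))
      = (\<Sum>j\<le>N. coeff b j * hser hs (n - 2 * int j))"
    by (rule sum.mono_neutral_left) (use assms in \<open>auto simp: coeff_eq_0\<close>)
  then show ?thesis by (simp add: lc_def)
qed

lemma lc_zero: "lc hs 0 0 n = 0"
  by (simp add: lc_def)

lemma lc_add: "lc hs (a + a') (b + b') n = lc hs a b n + lc hs a' b' n"
proof -
  define N where "N = max (degree b) (degree b')"
  have "degree (b + b') \<le> N" "degree b \<le> N" "degree b' \<le> N"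
    using degree_add_le_max[of b b'] by (auto simp: N_def)
  then show ?thesis
    by (simp add: lc_eq_sum_atMost[of _ N] algebra_simps sum.distrib)
qed

lemma lc_diff: "lc hs (a - a') (b - b') n = lc hs a b n - lc hs a' b' n"
  using lc_add[of hs "a - a'" a' "b - b'" b' n] by simp

lemma lc_smult: "lc hs (smult c a) (smult c b) n = c * lc hs a b n"
  using degree_smult_le[of c b]
  by (simp add: lc_eq_sum_atMost[of _ "degree b"] algebra_simps sum_distrib_left)

lemma lc_sum:
  "lc hs (\<Sum>l\<in>A. f l) (\<Sum>l\<in>A. g l) n = (\<Sum>l\<in>A. lc hs (f l) (g l) n)"
  by (induction A rule: infinite_finite_induct) (simp_all add: lc_zero lc_add)

lemma lc_const: "lc hs [:c:] 0 n = (if n = 0 then c else 0)"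
  by (auto simp: lc_def coeff_pCons split: nat.split elim!: evenE)

lemma lc_pCons:
  "lc hs (pCons c a) (pCons d b) n = lc hs a b (n - 2) + (if n = 0 then c else 0) + d * hser hs n"
proof -
  have "(if 0 \<le> n \<and> even n then coeff (pCons c a) (nat (n div 2)) else 0)
      = (if 0 \<le> n - 2 \<and> even (n - 2) then coeff a (nat ((n - 2) div 2)) else 0)
        + (if n = 0 then c else 0)"
    by (auto simp: coeff_pCons nat_diff_distrib split: nat.split elim!: evenE)
  moreover have "(\<Sum>j\<le>Suc (degree b). coeff (pCons d b) j * hser hs (n - 2 * int j))
      = d * hser hs n + (\<Sum>j\<le>degree b. coeff b j * hser hs (n - 2 - 2 * int j))"
    by (subst sum.atMost_Suc_shift) (simp add: algebra_simps)
  moreover have "degree (pCons d b) \<le> Suc (degree b)"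
    by (rule degree_pCons_le)
  ultimately show ?thesis
    by (simp add: lc_eq_sum_atMost[of "pCons d b" "Suc (degree b)"] lc_def)
qed

lemma lc_eq_0_imp:
  assumes "\<And>n. lc hs a b n = 0"
  shows "a = 0 \<and> b = 0"
proof -
  have "b = 0"
  proof (rule ccontr)
    assume "b \<noteq> 0"
    have "lc hs a b (2 * int (degree b) + 1)
        = (\<Sum>j\<le>degree b. coeff b j * hser hs (2 * int (degree b) + 1 - 2 * int j))"
      by (simp add: lc_def)
    also have "\<dots> = (\<Sum>j\<le>degree b. if j = degree b then coeff b j else 0)"
      by (rule sum.cong) (auto simp: hser_def)
    finally show False using assms \<open>b \<noteq> 0\<close> by simp
  qed
  moreover have "coeff a i = 0" for i
    using assms[of "2 * int i"] by (simp add: lc_def \<open>b = 0\<close>)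
  ultimately show ?thesis by (simp add: poly_eqI)
qed

lemma decomp_lc: "decomp hs (lc hs a b) = (a, b)"
  unfolding decomp_def
proof (rule the_equality)
  fix ab
  assume "lc hs (fst ab) (snd ab) = lc hs a b"
  then have "lc hs (fst ab - a) (snd ab - b) n = 0" for n
    by (simp add: lc_diff)
  then show "ab = (a, b)"
    using lc_eq_0_imp[of hs "fst ab - a" "snd ab - b"] by (simp add: prod_eq_iff)
qed simp

fun Hp :: "(nat \<Rightarrow> complex) \<Rightarrow> nat \<Rightarrow> complex poly" where
  "Hp hs 0 = 1"
| "Hp hs (Suc 0) = 0"
| "Hp hs (Suc (Suc k)) = pCons (- H hs k (-2)) (Hp hs k)"

fun Hq :: "(nat \<Rightarrow> complex) \<Rightarrow> nat \<Rightarrow> complex poly" where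
  "Hq hs 0 = 0"
| "Hq hs (Suc 0) = 1"
| "Hq hs (Suc (Suc k)) = pCons (- H hs k (-1)) (Hq hs k)"

lemma H_Suc_Suc:
  "H hs (Suc (Suc k)) n
     = H hs k (n - 2) - H hs k (-1) * hser hs n - (if n = 0 then H hs k (-2) else 0)"
  by (cases k) simp_all

lemma H_eq_lc: "H hs m = lc hs (Hp hs m) (Hq hs m)"
proof (induction m rule: nat_induct2)
  case 0
  show ?case using lc_const[of hs 1] by (simp add: fun_eq_iff one_pCons)
next
  case 1
  show ?case by (simp add: fun_eq_iff lc_def)
next
  case (step k)
  show ?case by (simp add: fun_eq_iff lc_pCons H_Suc_Suc step)
qed

lemma Hp_Hq_even: "Hp hs (2 * m) = monom 1 m \<and> Hq hs (2 * m) = 0"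
proof (induction m)
  case 0
  show ?case by (simp add: one_pCons monom_0)
next
  case (Suc m)
  have "H hs (2 * m) (- l) = 0" if "0 < l" for l
    using that by (simp add: H_eq_lc Suc lc_def)
  then show ?case by (simp add: Suc monom_Suc)
qed

lemma coeff_Hq_shift: "coeff (Hq hs (m + 2 * d)) (n + d) = coeff (Hq hs m) n"
  by (induction d) simp_all

lemma Hq_odd_lead: "coeff (Hq hs (2 * m + 1)) m = 1"
  using coeff_Hq_shift[of hs 1 m 0] by (simp add: add.commute)

lemma degree_Hq_odd: "degree (Hq hs (2 * m + 1)) \<le> m"
proof (induction m)
  case (Suc m)
  then show ?case
    using degree_pCons_le[of "- H hs (2 * m + 1) (-1)" "Hq hs (2 * m + 1)"] by simp
qed simp

lemma H_neg_eq_sum: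
  assumes "degree (Hq hs m) \<le> N" "1 \<le> l"
  shows "H hs m (- int l) = (\<Sum>j\<le>N. coeff (Hq hs m) j * hs (l + 2 * j))"
proof -
  have "hser hs (- int l - 2 * int j) = hs (l + 2 * j)" for j
    using assms(2) by (simp add: hser_def nat_add_distrib nat_mult_distrib add.commute)
  then show ?thesis using assms(2) by (simp add: H_eq_lc lc_eq_sum_atMost[OF assms(1)])
qed

lemma H_odd_neg:
  assumes "1 \<le> l"
  shows "H hs (2 * m + 1) (- int l)
           = hs (l + 2 * m) + (\<Sum>j<m. coeff (Hq hs (2 * m + 1)) j * hs (l + 2 * j))"
  using H_neg_eq_sum[OF degree_Hq_odd assms, of hs m] Hq_odd_lead[of hs m]
  by (simp add: lessThan_Suc_atMost[symmetric])

definition S_poly ::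
    "(nat \<Rightarrow> complex) \<Rightarrow> (nat \<Rightarrow> complex poly) \<Rightarrow> nat \<Rightarrow> complex poly" where
  "S_poly hs P j = P (j + 1) + (\<Sum>l = 1..j. smult (hs l) (P (j - l)))"

definition Sa :: "(nat \<Rightarrow> complex) \<Rightarrow> nat \<Rightarrow> complex poly" where
  "Sa hs j = S_poly hs (Hp hs) j + [:H hs j (-1):]"

definition Sb :: "(nat \<Rightarrow> complex) \<Rightarrow> nat \<Rightarrow> complex poly" where
  "Sb hs j = S_poly hs (Hq hs) j"

lemma coeff_S_poly:
  "coeff (S_poly hs P j) n = coeff (P (j + 1)) n + (\<Sum>l = 1..j. hs l * coeff (P (j - l)) n)"
  by (simp add: S_poly_def coeff_sum)

lemma S_eq_lc: "S hs j = lc hs (Sa hs j) (Sb hs j)"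
proof
  fix n
  have "lc hs (Sa hs j) (Sb hs j) n
      = lc hs (S_poly hs (Hp hs) j + [:H hs j (-1):]) (S_poly hs (Hq hs) j + 0) n"
    by (simp add: Sa_def Sb_def)
  also have "\<dots> = S hs j n"
    by (simp only: lc_add S_poly_def lc_sum lc_smult lc_const H_eq_lc S_def)
  finally show "S hs j n = lc hs (Sa hs j) (Sb hs j) n" ..
qed

lemma V_1_1 [simp]: "V hs j $ 1 $ 1 = Hp hs j"
  and V_1_2 [simp]: "V hs j $ 1 $ 2 = Hq hs j"
  and V_2_1 [simp]: "V hs j $ 2 $ 1 = Sa hs j"
  and V_2_2 [simp]: "V hs j $ 2 $ 2 = Sb hs j"
  by (simp_all add: V_def H_eq_lc S_eq_lc decomp_lc)

lemma poly_shift_S_poly: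
  assumes "\<And>m. poly_shift 1 (P (m + 2)) = P m" "poly_shift 1 (P 0) = 0" "poly_shift 1 (P 1) = 0"
  shows "poly_shift 1 (S_poly hs P (j + 2)) = S_poly hs P j"
proof -
  have "{1..j + 2} = insert (j + 2) (insert (j + 1) {1..j})" by auto
  moreover have "poly_shift 1 (P (j + 2 - l)) = P (j - l)" if "l \<le> j" for l
    using assms(1)[of "j - l"] that by (simp add: Suc_diff_le)
  ultimately show ?thesis
    using assms by (simp add: S_poly_def poly_shift_add poly_shift_sum poly_shift_smult)
qed

lemma plus_part_1_V:
  "plus_part 1 (V hs (j + 2)) = V hs j + E21 (coeff (V hs (j + 2) $ 1 $ 2) 0)"
proof -
  have "poly_shift 1 (S_poly hs (Hp hs) (j + 2)) = S_poly hs (Hp hs) j"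
    "poly_shift 1 (S_poly hs (Hq hs) (j + 2)) = S_poly hs (Hq hs) j"
    by (rule poly_shift_S_poly; simp add: poly_shift_pCons poly_shift_1)+
  then show ?thesis
    by (simp add: vec_eq_iff forall_2 plus_part_def E21_def Sa_def Sb_def
        poly_shift_add poly_shift_pCons)
qed

lemma V_eq_plus_part_V:
  "V hs j = plus_part 1 (V hs (j + 2)) - E21 (coeff (V hs (j + 2) $ 1 $ 2) 0)"
  by (simp only: plus_part_1_V add_diff_cancel)

lemma plus_part_V_odd:
  "plus_part d (V hs (2 * (i + d) + 1))
     = V hs (2 * i + 1)
       + E21 (if d = 0 then 0 else coeff (V hs (2 * (i + d) + 1) $ 1 $ 2) (d - 1))"
proof (induction d arbitrary: i)
  case 0
  show ?case by (simp add: vec_eq_iff forall_2 plus_part_def E21_def)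
next
  case (Suc d)
  have index_shift: "2 * (i + Suc d) + 1 = 2 * i + 1 + 2 + 2 * d"
    by simp
  define c where "c = (if d = 0 then 0 else coeff (V hs (2 * (Suc i + d) + 1) $ 1 $ 2) (d - 1))"
  have "plus_part (Suc d) (V hs (2 * (i + Suc d) + 1))
      = plus_part 1 (plus_part d (V hs (2 * (Suc i + d) + 1)))"
    by (simp add: plus_part_plus_part)
  also have "\<dots> = plus_part 1 (V hs (2 * i + 1 + 2) + E21 c)"
    unfolding Suc.IH c_def by (simp add: algebra_simps)
  also have "\<dots> = V hs (2 * i + 1) + E21 (coeff (Hq hs (2 * i + 1 + 2)) 0)"
    using plus_part_1_V[of hs "2 * i + 1"] by (simp add: plus_part_add plus_part_E21)
  also have "coeff (Hq hs (2 * i + 1 + 2)) 0 = coeff (Hq hs (2 * (i + Suc d) + 1)) d"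
    using coeff_Hq_shift[of hs "2 * i + 1 + 2" d 0] by (simp only: add_0 index_shift)
  finally show ?case by simp
qed

lemma sum_odd_even_split:
  fixes g :: "nat \<Rightarrow> 'a::comm_monoid_add"
  shows "(\<Sum>l = 1..2 * n + 1. g l) = (\<Sum>j\<le>n. g (2 * j + 1)) + (\<Sum>j<n. g (2 * j + 2))"
proof (induction n)
  case (Suc n)
  have "{1..2 * Suc n + 1} = insert (2 * n + 3) (insert (2 * n + 2) {1..2 * n + 1})"
    by auto
  then show ?case
    using Suc by (simp add: add_ac numeral_3_eq_3)
qed simp

text \<open>Since q vanishes at even indices, only the terms h_l q_{2k+3-l} with even l contribute
  to b_{2k+3}(0), and they cancel against p_{2k+3}(0) = -H^(2k+1)_2.\<close>

lemma coeff_0_trace_V_odd: "coeff (trace (V hs (2 * k + 3))) 0 = 0"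
proof -
  have "coeff (Hp hs (2 * k + 3)) 0 = - H hs (2 * k + 1) (- int 2)"
    by (simp add: numeral_3_eq_3)
  also have "\<dots> = - (\<Sum>j\<le>k. hs (2 * j + 2) * coeff (Hq hs (2 * k + 1)) j)"
    using H_neg_eq_sum[OF degree_Hq_odd[of hs k], of 2] by (simp add: mult.commute add.commute)
  finally have Hp_0: "coeff (Hp hs (2 * k + 3)) 0 = \<dots>" .
  have Hq_even_0: "coeff (Hq hs (2 * (k + 1) + 1 - (2 * j + 1))) 0 = 0" for j
    using Hp_Hq_even[of hs "k + 1 - j"] by (simp add: diff_mult_distrib2)
  have Hq_odd_0:
    "coeff (Hq hs (2 * (k + 1) + 1 - (2 * j + 2))) 0 = coeff (Hq hs (2 * k + 1)) j"
    if "j < k + 1" for j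
  proof -
    have "2 * (k + 1) + 1 - (2 * j + 2) + 2 * j = 2 * k + 1"
      using that by simp
    then show ?thesis
      using coeff_Hq_shift[of hs "2 * (k + 1) + 1 - (2 * j + 2)" j 0] by simp
  qed
  have "coeff (Sb hs (2 * (k + 1) + 1)) 0
      = coeff (Hq hs (2 * (k + 2))) 0
        + (\<Sum>l = 1..2 * (k + 1) + 1. hs l * coeff (Hq hs (2 * (k + 1) + 1 - l)) 0)"
    by (simp add: Sb_def coeff_S_poly del: Hq.simps)
  also have "\<dots>
      = (\<Sum>j<k + 1. hs (2 * j + 2) * coeff (Hq hs (2 * (k + 1) + 1 - (2 * j + 2))) 0)"
    using Hp_Hq_even[of hs "k + 2"] Hq_even_0 by (simp only: sum_odd_even_split) simp
  also have "\<dots> = (\<Sum>j\<le>k. hs (2 * j + 2) * coeff (Hq hs (2 * k + 1)) j)"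
    using Hq_odd_0 by (simp add: lessThan_Suc_atMost[symmetric])
  finally show ?thesis
    using Hp_0 by (simp add: trace_def sum_2 numeral_3_eq_3)
qed

lemma trace_V_odd: "trace (V hs (2 * k + 1)) = 0"
proof (induction k)
  case 0
  show ?case by (simp add: trace_def sum_2 Sb_def S_poly_def)
next
  case (Suc k)
  have "poly_shift 1 (trace (V hs (2 * k + 1 + 2))) = 0"
    using plus_part_1_V[of hs "2 * k + 1"] Suc.IH
    by (simp add: trace_plus_part[symmetric] trace_add trace_E21)
  moreover have "coeff (trace (V hs (2 * k + 1 + 2))) 0 = 0"
    using coeff_0_trace_V_odd[of hs k] by (simp add: numeral_3_eq_3)
  ultimately show ?case
    using pCons_coeff_0_poly_shift[of "trace (V hs (2 * k + 1 + 2))"] by simp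
qed

lemma H_cong:
  assumes agree: "\<forall>l\<in>{1..N}. hs' l = hs l"
  shows "m + nat (- n) \<le> N + 1 \<Longrightarrow> H hs' m n = H hs m n"
proof (induction m arbitrary: n rule: nat_induct2)
  case 1
  then show ?case using agree by (simp add: hser_def)
next
  case (step k)
  have "hser hs' n = hser hs n"
    using step.prems agree by (simp add: hser_def)
  moreover have "H hs' k (n - 2) = H hs k (n - 2)"
    using step.prems by (intro step.IH) simp
  ultimately show ?case
    using step.prems by (simp add: H_Suc_Suc step.IH)
qed simp

lemma Hp_Hq_cong:
  assumes "\<forall>l\<in>{1..N}. hs' l = hs l" "m \<le> N + 1"
  shows "Hp hs' m = Hp hs m \<and> Hq hs' m = Hq hs m"
  using assms(2)
proof (induction m rule: nat_induct2)
  case (step k)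
  then show ?case
    using H_cong[OF assms(1), of k "-1"] H_cong[OF assms(1), of k "-2"] by simp
qed simp_all

lemma S_poly_cong:
  assumes "\<forall>l\<in>{1..j}. hs' l = hs l" "\<forall>m\<le>j + 1. P' m = P m"
  shows "S_poly hs' P' j = S_poly hs P j"
  using assms by (auto simp: S_poly_def intro!: sum.cong)

lemma V_cong:
  assumes agree: "\<forall>l\<in>{1..j}. hs' l = hs l"
  shows "V hs' j = V hs j"
proof -
  have "Hp hs' m = Hp hs m" "Hq hs' m = Hq hs m" if "m \<le> j + 1" for m
    using Hp_Hq_cong[OF agree that] by simp_all
  moreover have "H hs' j (-1) = H hs j (-1)"
    by (rule H_cong[OF agree]) simp
  ultimately have "Sa hs' j = Sa hs j" "Sb hs' j = Sb hs j"
    using S_poly_cong[OF agree] by (simp_all add: Sa_def Sb_def)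
  moreover have "Hp hs' j = Hp hs j" "Hq hs' j = Hq hs j"
    using Hp_Hq_cong[OF agree] by simp_all
  ultimately show ?thesis
    by (simp add: vec_eq_iff forall_2)
qed

lemma coeff_0_Hp_odd:
  "coeff (Hp hs (2 * k + 3)) 0
     = - hs (2 * k + 2) - (\<Sum>j<k. coeff (Hq hs (2 * k + 1)) j * hs (2 + 2 * j))"
  using H_odd_neg[of 2 hs k] by (simp add: numeral_3_eq_3 add.commute)

lemma coeff_0_Sa_odd:
  "coeff (Sa hs (2 * k + 1)) 0
     = 2 * hs (2 * k + 1) + (\<Sum>l = 1..2 * k. hs l * coeff (Hp hs (2 * k + 1 - l)) 0)
       + (\<Sum>j<k. coeff (Hq hs (2 * k + 1)) j * hs (1 + 2 * j))"
proof -
  have "coeff (Hp hs (2 * (k + 1))) 0 = 0" "coeff (Hp hs 0) 0 = 1"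
    using Hp_Hq_even[of hs "k + 1"] by simp_all
  then show ?thesis
    using H_odd_neg[of 1 hs k] by (simp add: Sa_def coeff_S_poly add.commute del: Hp.simps)
qed

lemma hs_even_determined:
  assumes agree: "\<forall>l\<in>{1..2 * k + 1}. hs' l = hs l"
    and "Hp hs' (2 * k + 3) = Hp hs (2 * k + 3)"
  shows "hs' (2 * k + 2) = hs (2 * k + 2)"
proof -
  have "Hq hs' (2 * k + 1) = Hq hs (2 * k + 1)"
    using Hp_Hq_cong[OF agree] by simp
  then have "(\<Sum>j<k. coeff (Hq hs' (2 * k + 1)) j * hs' (2 + 2 * j))
      = (\<Sum>j<k. coeff (Hq hs (2 * k + 1)) j * hs (2 + 2 * j))"
    using agree by (intro sum.cong) auto
  then show ?thesis
    using assms(2) coeff_0_Hp_odd[of hs' k] coeff_0_Hp_odd[of hs k] by simp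
qed

lemma hs_odd_determined:
  assumes agree: "\<forall>l\<in>{1..2 * k}. hs' l = hs l"
    and "Sa hs' (2 * k + 1) = Sa hs (2 * k + 1)"
  shows "hs' (2 * k + 1) = hs (2 * k + 1)"
proof -
  have "(\<Sum>l = 1..2 * k. hs' l * coeff (Hp hs' (2 * k + 1 - l)) 0)
      = (\<Sum>l = 1..2 * k. hs l * coeff (Hp hs (2 * k + 1 - l)) 0)"
    using agree Hp_Hq_cong[OF agree] by (intro sum.cong) auto
  moreover have "(\<Sum>j<k. coeff (Hq hs' (2 * k + 1)) j * hs' (1 + 2 * j))
      = (\<Sum>j<k. coeff (Hq hs (2 * k + 1)) j * hs (1 + 2 * j))"
    using agree Hp_Hq_cong[OF agree] by (intro sum.cong) auto
  ultimately show ?thesis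
    using assms(2) coeff_0_Sa_odd[of hs' k] coeff_0_Sa_odd[of hs k] by simp
qed

lemma V_odd_inj:
  "V hs' (2 * k + 1) = V hs (2 * k + 1) \<Longrightarrow> \<forall>l\<in>{1..2 * k + 1}. hs' l = hs l"
proof (induction k)
  case 0
  have "Sa hs' (2 * 0 + 1) = Sa hs (2 * 0 + 1)"
    by (simp only: V_2_1[symmetric] "0.prems")
  then have "hs' 1 = hs 1"
    using hs_odd_determined[of 0 hs' hs] by simp
  then show ?case by simp
next
  case (Suc k)
  have index: "2 * Suc k + 1 = 2 * k + 1 + 2" "2 * Suc k + 1 = 2 * k + 3"
    by simp_all
  have "V hs' (2 * k + 1) = V hs (2 * k + 1)"
    using Suc.prems unfolding index(1)
    by (simp only: V_eq_plus_part_V[of hs' "2 * k + 1"] V_eq_plus_part_V[of hs "2 * k + 1"])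
  then have agree_odd: "\<forall>l\<in>{1..2 * k + 1}. hs' l = hs l"
    by (rule Suc.IH)
  moreover have "Hp hs' (2 * k + 3) = Hp hs (2 * k + 3)"
    using Suc.prems unfolding index(2) by (simp only: V_1_1[symmetric])
  ultimately have "hs' (2 * k + 2) = hs (2 * k + 2)"
    by (rule hs_even_determined)
  moreover have "{1..2 * Suc k} = insert (2 * k + 2) {1..2 * k + 1}"
    by auto
  ultimately have agree_even: "\<forall>l\<in>{1..2 * Suc k}. hs' l = hs l"
    using agree_odd by simp
  have "Sa hs' (2 * Suc k + 1) = Sa hs (2 * Suc k + 1)"
    by (simp only: V_2_1[symmetric] Suc.prems)
  then have "hs' (2 * Suc k + 1) = hs (2 * Suc k + 1)"
    by (rule hs_odd_determined[OF agree_even])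
  moreover have "{1..2 * Suc k + 1} = insert (2 * Suc k + 1) {1..2 * Suc k}"
    by auto
  ultimately show ?case
    using agree_even by simp
qed

theorem mainTheorem1:
  fixes hs :: "nat \<Rightarrow> complex" and k :: nat
  shows "(\<forall>hs'. V hs' (2*k+1) = V hs (2*k+1) \<longleftrightarrow> (\<forall>l\<in>{1..2*k+1}. hs' l = hs l))
       \<and> trace (V hs (2*k+1)) = 0
       \<and> (\<forall>i\<le>k. V hs (2*i+1) =
            plus_part (k - i) (V hs (2*k+1))
            - E21 (if i < k then coeff (V hs (2*k+1) $ 1 $ 2) (k - i - 1) else 0))"
proof (intro conjI allI impI)
  show "V hs' (2*k+1) = V hs (2*k+1) \<longleftrightarrow> (\<forall>l\<in>{1..2*k+1}. hs' l = hs l)" for hs'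
    using V_odd_inj V_cong by blast
  show "trace (V hs (2*k+1)) = 0"
    by (rule trace_V_odd)
  show "V hs (2*i+1) = plus_part (k - i) (V hs (2*k+1))
          - E21 (if i < k then coeff (V hs (2*k+1) $ 1 $ 2) (k - i - 1) else 0)" if "i \<le> k" for i
    using plus_part_V_odd[of "k - i" hs i] that by simp
qed

end
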